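(* Let $\Psi\in\mathcal{K}_{\mathrm{FxT}}$ and $\sigma(s)=\sum_{i=1}^nc_is^{r_i}$ with $1\le r_1<r_2<\dots<r_n$ and real $c_i\neq0$, and suppose $\sigma'(s)>0$ for all $s>0$. Then there exists $\tilde\Psi\in\mathcal{K}_{\mathrm{FxT}}$ such that $\tilde\Psi(\sigma(s))\le\Psi(s)\sigma'(s)$ for all $s>0$.
   Context: $\mathcal{K}_{\mathrm{FxT}}$ denotes the set of functions $\alpha:\mathbb{R}_{\ge0}\to\mathbb{R}_{\ge0}$ of the form $\alpha(s)=c_1s^{p_1}+c_2s^{p_2}$ with $c_1,c_2>0$, $p_1\in(0,1)$ and $p_2>1$. *)

theory Defs
  imports "HOL-Analysis.Analysis"
begin

text \<open>K_FxT: functions on the nonnegative reals of the form c1 s^p1 + c2 s^p2 with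
  c1, c2 > 0, 0 < p1 < 1, p2 > 1. Functions are total in HOL; membership only
  constrains their values on s \<ge> 0.\<close>
definition K_FxT :: "(real \<Rightarrow> real) set" where
  "K_FxT = {\<alpha>. \<exists>c1 c2 p1 p2. c1 > 0 \<and> c2 > 0 \<and> 0 < p1 \<and> p1 < 1 \<and> p2 > 1 \<and>
              (\<forall>s\<ge>0. \<alpha> s = c1 * s powr p1 + c2 * s powr p2)}"

end

theory Submission
  imports Defs
begin

(* Near 0 the power sum sigma behaves like c_1 s^r_1 and sigma' like c_1 r_1 s^(r_1 - 1); near
   infinity the same holds with index n. Positivity of sigma' therefore forces c_1, c_n > 0.
   The exponents q_1 = (p_1 + r_1 - 1) / r_1 in (0,1) and q_2 = (p_2 + r_n - 1) / r_n > 1 are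
   chosen so that sigma^q_1 and s^p_1 sigma' have the same order near 0, and sigma^q_2 and
   s^p_2 sigma' near infinity. Hence Psi(s) sigma'(s) / (sigma(s)^q_1 + sigma(s)^q_2) has positive
   limits at 0 and at infinity; being continuous and positive in between, it is bounded below by
   some m > 0, and Psi'(x) = m x^q_1 + m x^q_2 works. *)

lemma powr_tendsto_0_at_right_0:
  fixes a :: real
  assumes "a > 0"
  shows "((\<lambda>s. s powr a) \<longlongrightarrow> 0) (at_right 0)"
  by (rule tendsto_zero_powrI[OF tendsto_ident_at tendsto_const _ assms])
     (simp add: eventually_at_right_less eventually_mono[OF eventually_at_right_less])

lemma powr_sum_div_dominant_tendsto:
  fixes f e :: "'i \<Rightarrow> real" and F :: "real filter"
  assumes "finite I" "k \<in> I" "\<forall>\<^sub>F s in F. s > 0"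
    and "\<And>i. i \<in> I - {k} \<Longrightarrow> ((\<lambda>s. s powr (e i - e k)) \<longlongrightarrow> 0) F"
  shows "((\<lambda>s. (\<Sum>i\<in>I. f i * s powr e i) / s powr e k) \<longlongrightarrow> f k) F"
proof -
  have "((\<lambda>s. f k + (\<Sum>i\<in>I - {k}. f i * s powr (e i - e k))) \<longlongrightarrow> f k + 0) F"
    by (intro tendsto_add tendsto_const tendsto_null_sum tendsto_mult_right_zero assms(4))
  moreover have "\<forall>\<^sub>F s in F. f k + (\<Sum>i\<in>I - {k}. f i * s powr (e i - e k))
                    = (\<Sum>i\<in>I. f i * s powr e i) / s powr e k"
    using assms(3) by eventually_elim
      (simp add: sum.remove[OF assms(1,2)] sum_divide_distrib powr_diff add_divide_distrib)
  ultimately show ?thesis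
    by (auto intro: Lim_transform_eventually)
qed

lemma continuous_pos_has_pos_lower_bound:
  fixes R :: "real \<Rightarrow> real"
  assumes cont: "continuous_on {0<..} R" and pos: "\<And>s. s > 0 \<Longrightarrow> R s > 0"
    and lim_0: "(R \<longlongrightarrow> l0) (at_right 0)" "l0 > 0"
    and lim_top: "(R \<longlongrightarrow> l1) at_top" "l1 > 0"
  shows "\<exists>m>0. \<forall>s>0. m \<le> R s"
proof -
  obtain b where b: "b > 0" "\<And>s. 0 < s \<Longrightarrow> s < b \<Longrightarrow> l0 / 2 < R s"
    using order_tendstoD(1)[OF lim_0(1), of "l0 / 2"] lim_0(2)
    by (auto simp: eventually_at_right_field)
  obtain N where N: "\<And>s. N \<le> s \<Longrightarrow> l1 / 2 < R s"
    using order_tendstoD(1)[OF lim_top(1), of "l1 / 2"] lim_top(2)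
    by (auto simp: eventually_at_top_linorder)
  have "{b/2..max N b} \<noteq> {}" "{b/2..max N b} \<subseteq> {0<..}" using b(1) by auto
  then obtain s\<^sub>m where s\<^sub>m: "s\<^sub>m \<in> {b/2..max N b}" "\<And>s. s \<in> {b/2..max N b} \<Longrightarrow> R s\<^sub>m \<le> R s"
    using continuous_attains_inf[OF compact_Icc _ continuous_on_subset[OF cont]] by metis
  have "R s\<^sub>m > 0" using s\<^sub>m(1) b(1) pos by auto
  show ?thesis
  proof (intro exI[of _ "min (min (l0 / 2) (l1 / 2)) (R s\<^sub>m)"] conjI allI impI)
    show "min (min (l0 / 2) (l1 / 2)) (R s\<^sub>m) > 0"
      using lim_0(2) lim_top(2) \<open>R s\<^sub>m > 0\<close> by simp
    fix s :: real assume "s > 0"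
    then consider "s < b" | "N \<le> s" | "s \<in> {b/2..max N b}" by fastforce
    then show "min (min (l0 / 2) (l1 / 2)) (R s\<^sub>m) \<le> R s"
      by cases (use b(2) N s\<^sub>m(2) \<open>s > 0\<close> in \<open>fastforce+\<close>)
  qed
qed

lemma powr_ratio_rescale:
  fixes s u v r p p' q q' a b :: real
  assumes "s > 0" "u > 0" "r > 0" "q = (p + r - 1) / r"
  shows "(a * s powr p + b * s powr p') * (s powr (r - 1) * v)
           / ((s powr r * u) powr q + (s powr r * u) powr q')
         = (a + b * s powr (p' - p)) * v / (u powr q + s powr (r * (q' - q)) * u powr q')"
proof -
  have "q * r = p + r - 1" using assms(3,4) by simp
  then have "(s powr r * u) powr q = s powr (p + r - 1) * u powr q"
    using assms(1,2) by (simp add: powr_mult powr_powr mult.commute)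
  moreover have "(s powr r * u) powr q' = (s powr r * u) powr q * (s powr r * u) powr (q' - q)"
    by (simp flip: powr_add)
  moreover have "(s powr r * u) powr (q' - q) = s powr (r * (q' - q)) * u powr (q' - q)"
    using assms(1,2) by (simp add: powr_mult powr_powr)
  ultimately have denominator: "(s powr r * u) powr q + (s powr r * u) powr q'
             = s powr (p + r - 1) * (u powr q + s powr (r * (q' - q)) * u powr q')"
    using assms(2) by (simp add: algebra_simps flip: powr_add)
  have numerator: "(a * s powr p + b * s powr p') * (s powr (r - 1) * v)
             = s powr (p + r - 1) * ((a + b * s powr (p' - p)) * v)"
    using assms(1) by (simp add: algebra_simps flip: powr_add)
  show ?thesis
    unfolding numerator denominator using assms(1) by simp
qed

lemma powr_ratio_tendsto:
  fixes S S' :: "real \<Rightarrow> real" and F :: "real filter"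
  assumes F_pos: "\<forall>\<^sub>F s in F. s > 0" and "r > 0" "q = (p + r - 1) / r"
    and S_lim: "((\<lambda>s. S s / s powr r) \<longlongrightarrow> U) F" and "U > 0"
    and S'_lim: "((\<lambda>s. S' s / s powr (r - 1)) \<longlongrightarrow> V) F"
    and "((\<lambda>s. s powr (p' - p)) \<longlongrightarrow> 0) F" "((\<lambda>s. s powr (r * (q' - q))) \<longlongrightarrow> 0) F"
  shows "((\<lambda>s. (a * s powr p + b * s powr p') * S' s / (S s powr q + S s powr q'))
           \<longlongrightarrow> a * V / U powr q) F"
proof -
  let ?u = "\<lambda>s. S s / s powr r" and ?v = "\<lambda>s. S' s / s powr (r - 1)"
  have "((\<lambda>s. (a + b * s powr (p' - p)) * ?v s
              / (?u s powr q + s powr (r * (q' - q)) * ?u s powr q'))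
          \<longlongrightarrow> (a + b * 0) * V / (U powr q + 0 * U powr q')) F"
    using assms(4-) by (intro tendsto_intros) auto
  moreover have "\<forall>\<^sub>F s in F.
      (a + b * s powr (p' - p)) * ?v s / (?u s powr q + s powr (r * (q' - q)) * ?u s powr q')
        = (a * s powr p + b * s powr p') * S' s / (S s powr q + S s powr q')"
    using F_pos order_tendstoD(1)[OF S_lim \<open>U > 0\<close>]
  proof eventually_elim
    case (elim s)
    then show ?case
      using powr_ratio_rescale[OF elim(1,2) assms(2,3),
          where a = a and b = b and p' = p' and q' = q' and v = "?v s"]
      by simp
  qed
  ultimately show ?thesis
    by (auto intro: Lim_transform_eventually)
qed

locale increasing_powr_sum =
  fixes c r :: "nat \<Rightarrow> real" and n :: nat
  assumes n_ge_1: "n \<ge> 1"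
    and r_1_pos: "r 1 > 0"
    and r_strict_mono: "\<forall>i j. 1 \<le> i \<longrightarrow> i < j \<longrightarrow> j \<le> n \<longrightarrow> r i < r j"
    and c_nonzero: "\<forall>i\<in>{1..n}. c i \<noteq> 0"
    and deriv_pos: "\<forall>s>0. deriv (\<lambda>t. \<Sum>i=1..n. c i * t powr r i) s > 0"
begin

definition \<sigma> :: "real \<Rightarrow> real"
  where "\<sigma> t = (\<Sum>i=1..n. c i * t powr r i)"

definition \<sigma>' :: "real \<Rightarrow> real"
  where "\<sigma>' t = (\<Sum>i=1..n. c i * r i * t powr (r i - 1))"

lemma r_lowest: "i \<in> {1..n} - {1} \<Longrightarrow> r 1 < r i"
  using r_strict_mono by auto

lemma r_highest: "i \<in> {1..n} - {n} \<Longrightarrow> r i < r n"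
  using r_strict_mono by auto

lemma r_pos: "i \<in> {1..n} \<Longrightarrow> r i > 0"
  using r_lowest r_1_pos by (cases "i = 1") force+

lemma \<sigma>_has_real_derivative: "s > 0 \<Longrightarrow> (\<sigma> has_real_derivative \<sigma>' s) (at s)"
  unfolding \<sigma>_def[abs_def] \<sigma>'_def
  by (intro DERIV_sum DERIV_cmult[where c = "c _", OF has_real_derivative_powr, THEN DERIV_cong])
     simp_all

lemma deriv_\<sigma>: "s > 0 \<Longrightarrow> deriv \<sigma> s = \<sigma>' s"
  by (rule DERIV_imp_deriv[OF \<sigma>_has_real_derivative])

lemma \<sigma>'_pos: "s > 0 \<Longrightarrow> \<sigma>' s > 0"
  using deriv_pos deriv_\<sigma> unfolding \<sigma>_def[abs_def] by auto

lemma \<sigma>_div_lowest_tendsto: "((\<lambda>s. \<sigma> s / s powr r 1) \<longlongrightarrow> c 1) (at_right 0)"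
  unfolding \<sigma>_def using n_ge_1 r_lowest
  by (intro powr_sum_div_dominant_tendsto powr_tendsto_0_at_right_0)
     (auto simp: eventually_at_right_less)

lemma \<sigma>'_div_lowest_tendsto: "((\<lambda>s. \<sigma>' s / s powr (r 1 - 1)) \<longlongrightarrow> c 1 * r 1) (at_right 0)"
  unfolding \<sigma>'_def using n_ge_1 r_lowest
  by (intro powr_sum_div_dominant_tendsto[where f = "\<lambda>i. c i * r i"] powr_tendsto_0_at_right_0)
     (auto simp: eventually_at_right_less)

lemma \<sigma>_div_highest_tendsto: "((\<lambda>s. \<sigma> s / s powr r n) \<longlongrightarrow> c n) at_top"
  unfolding \<sigma>_def using n_ge_1 r_highest
  by (intro powr_sum_div_dominant_tendsto tendsto_neg_powr[OF _ filterlim_ident])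
     (auto simp: eventually_gt_at_top)

lemma \<sigma>'_div_highest_tendsto: "((\<lambda>s. \<sigma>' s / s powr (r n - 1)) \<longlongrightarrow> c n * r n) at_top"
  unfolding \<sigma>'_def using n_ge_1 r_highest
  by (intro powr_sum_div_dominant_tendsto[where f = "\<lambda>i. c i * r i"]
        tendsto_neg_powr[OF _ filterlim_ident])
     (auto simp: eventually_gt_at_top)

lemma coeff_pos_from_\<sigma>'_asymptotic:
  assumes "((\<lambda>s. \<sigma>' s / s powr e) \<longlongrightarrow> c i * r i) F" "F \<noteq> bot" "\<forall>\<^sub>F s in F. s > 0"
    and "i \<in> {1..n}"
  shows "c i > 0"
proof -
  have "c i * r i \<ge> 0"
    by (rule tendsto_lowerbound[OF assms(1) eventually_mono[OF assms(3)] assms(2)])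
       (simp add: \<sigma>'_pos less_imp_le)
  moreover have "c i \<noteq> 0"
    using c_nonzero assms(4) by blast
  ultimately show ?thesis
    using r_pos[OF assms(4)] by (simp add: zero_le_mult_iff)
qed

lemma c_1_pos: "c 1 > 0"
  using coeff_pos_from_\<sigma>'_asymptotic[OF \<sigma>'_div_lowest_tendsto] n_ge_1
  by (simp add: eventually_at_right_less)

lemma c_n_pos: "c n > 0"
  using coeff_pos_from_\<sigma>'_asymptotic[OF \<sigma>'_div_highest_tendsto] n_ge_1
  by (simp add: eventually_gt_at_top)

lemma \<sigma>_pos:
  assumes "s > 0"
  shows "\<sigma> s > 0"
proof -
  have "\<forall>\<^sub>F e in at_right 0. 0 < e \<and> e < s \<and> \<sigma> e / e powr r 1 > 0"
    using eventually_at_right_less order_tendstoD(2)[OF tendsto_ident_at assms]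
      order_tendstoD(1)[OF \<sigma>_div_lowest_tendsto c_1_pos]
    by eventually_elim auto
  then obtain e where e: "0 < e" "e < s" "\<sigma> e / e powr r 1 > 0"
    using eventually_happens by force
  have "0 < \<sigma> e" using e by (simp add: zero_less_divide_iff)
  also have "\<sigma> e < \<sigma> s"
  proof (rule DERIV_pos_imp_increasing[OF e(2)])
    fix x assume "e \<le> x"
    then have "x > 0" using e(1) by linarith
    then show "\<exists>y. (\<sigma> has_real_derivative y) (at x) \<and> 0 < y"
      using \<sigma>_has_real_derivative \<sigma>'_pos by blast
  qed
  finally show ?thesis .
qed

lemma continuous_on_\<sigma>: "continuous_on {0<..} \<sigma>"
  by (intro continuous_at_imp_continuous_on ballI DERIV_isCont[OF \<sigma>_has_real_derivative]) simp

lemma continuous_on_\<sigma>': "continuous_on {0<..} \<sigma>'"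
  unfolding \<sigma>'_def[abs_def] by (intro continuous_intros) auto

lemma K_FxT_comparison:
  assumes "\<Psi> \<in> K_FxT" and r_1_ge_1: "r 1 \<ge> 1"
  shows "\<exists>\<Psi>' \<in> K_FxT. \<forall>s>0. \<Psi>' (\<sigma> s) \<le> \<Psi> s * deriv \<sigma> s"
proof -
  obtain a\<^sub>1 a\<^sub>2 p\<^sub>1 p\<^sub>2 where a: "a\<^sub>1 > 0" "a\<^sub>2 > 0" and p: "0 < p\<^sub>1" "p\<^sub>1 < 1" "p\<^sub>2 > 1"
    and \<Psi>: "\<And>s. s \<ge> 0 \<Longrightarrow> \<Psi> s = a\<^sub>1 * s powr p\<^sub>1 + a\<^sub>2 * s powr p\<^sub>2"
    using assms(1) unfolding K_FxT_def by blast
  define q\<^sub>1 where "q\<^sub>1 = (p\<^sub>1 + r 1 - 1) / r 1"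
  define q\<^sub>2 where "q\<^sub>2 = (p\<^sub>2 + r n - 1) / r n"
  have r_n_pos: "r n > 0" using r_pos n_ge_1 by simp
  have q: "0 < q\<^sub>1" "q\<^sub>1 < 1" "q\<^sub>2 > 1"
    using p r_1_ge_1 r_n_pos unfolding q\<^sub>1_def q\<^sub>2_def by (auto simp: field_simps)
  define R where
    "R s = (a\<^sub>1 * s powr p\<^sub>1 + a\<^sub>2 * s powr p\<^sub>2) * \<sigma>' s / (\<sigma> s powr q\<^sub>1 + \<sigma> s powr q\<^sub>2)" for s
  have "((\<lambda>s. s powr (p\<^sub>2 - p\<^sub>1)) \<longlongrightarrow> 0) (at_right 0)"
    "((\<lambda>s. s powr (r 1 * (q\<^sub>2 - q\<^sub>1))) \<longlongrightarrow> 0) (at_right 0)"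
    using p q r_1_pos by (auto intro!: powr_tendsto_0_at_right_0)
  then have lim_0: "(R \<longlongrightarrow> a\<^sub>1 * (c 1 * r 1) / c 1 powr q\<^sub>1) (at_right 0)"
    unfolding R_def
    by (intro powr_ratio_tendsto[OF _ r_1_pos q\<^sub>1_def \<sigma>_div_lowest_tendsto c_1_pos
          \<sigma>'_div_lowest_tendsto])
       (auto simp: eventually_at_right_less)
  have "((\<lambda>s. s powr (p\<^sub>1 - p\<^sub>2)) \<longlongrightarrow> 0) at_top"
    "((\<lambda>s. s powr (r n * (q\<^sub>1 - q\<^sub>2))) \<longlongrightarrow> 0) at_top"
    using p q r_n_pos by (auto intro!: tendsto_neg_powr[OF _ filterlim_ident] simp: mult_pos_neg)
  then have lim_top: "(R \<longlongrightarrow> a\<^sub>2 * (c n * r n) / c n powr q\<^sub>2) at_top"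
    unfolding R_def add.commute[of "a\<^sub>1 * _"] add.commute[of "\<sigma> _ powr q\<^sub>1"]
    by (intro powr_ratio_tendsto[OF _ r_n_pos q\<^sub>2_def \<sigma>_div_highest_tendsto c_n_pos
          \<sigma>'_div_highest_tendsto])
       (auto simp: eventually_gt_at_top)
  have denominator_pos: "\<sigma> s powr q\<^sub>1 + \<sigma> s powr q\<^sub>2 > 0" if "s > 0" for s
    using \<sigma>_pos[OF that] by (simp add: add_pos_pos)
  have cont: "continuous_on {0<..} R"
    unfolding R_def
    by (intro continuous_intros continuous_on_\<sigma> continuous_on_\<sigma>')
       (auto dest: \<sigma>_pos denominator_pos)
  have pos: "R s > 0" if "s > 0" for s
    unfolding R_def using that a \<sigma>'_pos[OF that] denominator_pos[OF that]
    by (simp add: add_pos_pos)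
  obtain m where m: "m > 0" "\<And>s. s > 0 \<Longrightarrow> m \<le> R s"
    using continuous_pos_has_pos_lower_bound[OF cont pos lim_0 _ lim_top] a c_1_pos c_n_pos
      r_1_pos r_n_pos
    by auto
  show ?thesis
  proof (intro bexI[of _ "\<lambda>x. m * x powr q\<^sub>1 + m * x powr q\<^sub>2"] allI impI)
    show "(\<lambda>x. m * x powr q\<^sub>1 + m * x powr q\<^sub>2) \<in> K_FxT"
      unfolding K_FxT_def using m(1) q by blast
    fix s :: real assume "s > 0"
    then have "m * (\<sigma> s powr q\<^sub>1 + \<sigma> s powr q\<^sub>2) \<le> \<Psi> s * \<sigma>' s"
      using m(2)[of s] \<sigma>_pos[of s] \<Psi>[of s] by (simp add: R_def pos_le_divide_eq add_pos_pos)
    then show "m * \<sigma> s powr q\<^sub>1 + m * \<sigma> s powr q\<^sub>2 \<le> \<Psi> s * deriv \<sigma> s"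
      using deriv_\<sigma>[OF \<open>s > 0\<close>] by (simp add: distrib_left)
  qed
qed

end

theorem lemma5:
  fixes \<Psi> :: "real \<Rightarrow> real" and n :: nat and c r :: "nat \<Rightarrow> real"
  assumes "\<Psi> \<in> K_FxT"
    and "n \<ge> 1"
    and "1 \<le> r 1"
    and "\<forall>i j. 1 \<le> i \<longrightarrow> i < j \<longrightarrow> j \<le> n \<longrightarrow> r i < r j"
    and "\<forall>i\<in>{1..n}. c i \<noteq> 0"
    and "\<forall>s>0. deriv (\<lambda>t. \<Sum>i=1..n. c i * t powr r i) s > 0"
  shows "\<exists>\<Psi>' \<in> K_FxT. \<forall>s>0.
           \<Psi>' (\<Sum>i=1..n. c i * s powr r i) \<le> \<Psi> s * deriv (\<lambda>t. \<Sum>i=1..n. c i * t powr r i) s"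
proof -
  interpret increasing_powr_sum c r n
    using assms(2-) by unfold_locales auto
  show ?thesis
    using K_FxT_comparison[OF assms(1,3)] unfolding \<sigma>_def[abs_def] .
qed

end
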